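(* Let $\beta$ be an ordered partition of $N$ and $x\in X^\beta$. Then $\bar W_{[x]}=\bar W_{\beta(x)}$, where $\bar W_{[x]}=\{u\in\bar W: ux\bar W_\beta=x\bar W_\beta\}$ and $\bar W_{\beta(x)}$ is the subgroup of $\bar W$ generated by the reflections $s_{\alpha}$ with $\alpha\in\bar\Pi\cap x(\bar R_{\beta,+})$.
   Context: Fix $N\ge2$. $\bar P=\bigoplus_{i=1}^N\mathbb Z\epsilon_i$ with $(\epsilon_i,\epsilon_j)=\delta_{ij}$; $\bar R=\{\alpha_{ij}=\epsilon_i-\epsilon_j:i\ne j\}$, $\bar R_+=\{\alpha_{ij}:i<j\}$, $\alpha_i=\alpha_{i,i+1}$, $\bar\Pi=\{\alpha_1,\dots,\alpha_{N-1}\}$; $\bar P_-=\{\eta\in\bar P:(\eta,\alpha)\le0\ \forall\alpha\in\bar R_+\}$. $\bar W=\mathfrak S_N$ acts by permuting indices; $W=\bar W\ltimes\bar P$ with elements $wt_\eta$, $wt_\eta w^{-1}=t_{w(\eta)}$. Affine roots (with formal $\delta$): $R=\{\bar\alpha+k\delta:\bar\alpha\in\bar R,k\in\mathbb Z\}$, $R_+=\{\bar\alpha+k\delta:\bar\alpha\in\bar R_+,k\ge0\}\cup\{-\bar\alpha+k\delta:\bar\alpha\in\bar R_+,k>0\}$, $R_-=R\setminus R_+$; $W$ acts on $R$ by $w(\bar\alpha+k\delta)=w(\bar\alpha)+k\delta$, $t_\eta(\bar\alpha+k\delta)=\bar\alpha+(k-(\eta,\bar\alpha))\delta$ (so $\bar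 R\subset R$ and $x(\bar R_{\beta,+})\subset R$); $l(w)=\#(R_+\cap w^{-1}(R_-))$. An ordered partition $\beta$ of $N$ gives blocks of consecutive indices of sizes $\beta_1,\dots,\beta_r$; $\bar R_\beta=\{\alpha_{ij}:i,j\text{ in the same block}\}$, $\bar R_{\beta,+}=\bar R_\beta\cap\bar R_+$, $\bar W_\beta$ the subgroup generated by $s_{\alpha_i}$, $\alpha_i\in\bar R_\beta$; $W^\beta=\{w\in W:l(wu)\ge l(w)\ \forall u\in\bar W_\beta\}$, $\bar W^\beta=W^\beta\cap\bar W$. For $w\in\bar W^\beta$, $\eta_w\in\bar P_-$ is defined by $(\eta_w,\epsilon_1)=0$ and $(\eta_w,\alpha_i)=-1$ if $\alpha_i\in w(\bar R_+\setminus\bar R_{\beta,+})$, $0$ otherwise; $\bar P_-(w)=\{\eta+\eta_w:\eta\in\bar P_-\}$; $X^\beta=\{t_\eta w:w\in\bar W^\beta,\eta\in\bar P_-(w)\}$. *)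

theory Defs
  imports "HOL-Combinatorics.Transposition" "HOL-Combinatorics.Permutations"
begin

text \<open>Indices 1..N of the paper are rendered as 0..<N.
  An element t_eta w of W is represented by the pair (eta, w), with
  eta :: nat => int (coefficients w.r.t. epsilon_i, zero outside 0..<N) and
  w a permutation of {0..<N} (identity outside).
  An affine root eps_i - eps_j + k delta is the triple (i, j, k).\<close>

type_synonym affW = "(nat \<Rightarrow> int) \<times> (nat \<Rightarrow> nat)"
type_synonym aroot = "nat \<times> nat \<times> int"

definition Wbar :: "nat \<Rightarrow> (nat \<Rightarrow> nat) set" where
  "Wbar N = {w. w permutes {0..<N}}"

definition isW :: "nat \<Rightarrow> affW \<Rightarrow> bool" where
  "isW N x \<longleftrightarrow> snd x permutes {0..<N} \<and> (\<forall>i\<ge>N. fst x i = 0)"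

text \<open>(t_eta w)(t_eta' w') = t_(eta + w(eta')) (w w'), where (w eta)(i) = eta(w^-1 i).\<close>
definition wmult :: "affW \<Rightarrow> affW \<Rightarrow> affW" where
  "wmult x y = (\<lambda>i. fst x i + fst y (inv (snd x) i), snd x \<circ> snd y)"

definition emb :: "(nat \<Rightarrow> nat) \<Rightarrow> affW" where
  "emb w = (\<lambda>_. 0, w)"

text \<open>Action: w(eps_i - eps_j + k delta) = eps_(w i) - eps_(w j) + k delta,
  t_eta(abar + k delta) = abar + (k - (eta, abar)) delta.\<close>
definition act :: "affW \<Rightarrow> aroot \<Rightarrow> aroot" where
  "act x a = (case a of (i, j, k) \<Rightarrow>
     (snd x i, snd x j, k - (fst x (snd x i) - fst x (snd x j))))"

definition pos_root :: "nat \<Rightarrow> aroot \<Rightarrow> bool" where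
  "pos_root N a = (case a of (i, j, k) \<Rightarrow> i < N \<and> j < N \<and>
     ((i < j \<and> k \<ge> 0) \<or> (j < i \<and> k > 0)))"

definition neg_root :: "nat \<Rightarrow> aroot \<Rightarrow> bool" where
  "neg_root N a = (case a of (i, j, k) \<Rightarrow> i < N \<and> j < N \<and> i \<noteq> j \<and>
     \<not> pos_root N a)"

definition len :: "nat \<Rightarrow> affW \<Rightarrow> nat" where
  "len N x = card {a. pos_root N a \<and> neg_root N (act x a)}"

definition ordered_partition :: "nat \<Rightarrow> nat list \<Rightarrow> bool" where
  "ordered_partition N \<beta> \<longleftrightarrow> (\<forall>b\<in>set \<beta>. 0 < b) \<and> sum_list \<beta> = N"

definition same_block :: "nat list \<Rightarrow> nat \<Rightarrow> nat \<Rightarrow> bool" where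
  "same_block \<beta> i j \<longleftrightarrow> (\<exists>k<length \<beta>.
     sum_list (take k \<beta>) \<le> i \<and> i < sum_list (take (Suc k) \<beta>) \<and>
     sum_list (take k \<beta>) \<le> j \<and> j < sum_list (take (Suc k) \<beta>))"

text \<open>Subgroup of permutations generated by a set of involutions (transpositions):
  closure under composition containing the identity.\<close>
inductive_set gen :: "(nat \<Rightarrow> nat) set \<Rightarrow> (nat \<Rightarrow> nat) set" for S where
  gen_id: "id \<in> gen S"
| gen_step: "s \<in> S \<Longrightarrow> g \<in> gen S \<Longrightarrow> s \<circ> g \<in> gen S"

definition Wbeta :: "nat \<Rightarrow> nat list \<Rightarrow> (nat \<Rightarrow> nat) set" where
  "Wbeta N \<beta> = gen {transpose i (Suc i) | i. Suc i < N \<and> same_block \<beta> i (Suc i)}"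

definition Wupper :: "nat \<Rightarrow> nat list \<Rightarrow> affW set" where
  "Wupper N \<beta> = {x. isW N x \<and> (\<forall>u\<in>Wbeta N \<beta>. len N (wmult x (emb u)) \<ge> len N x)}"

definition WbarUpper :: "nat \<Rightarrow> nat list \<Rightarrow> (nat \<Rightarrow> nat) set" where
  "WbarUpper N \<beta> = {w \<in> Wbar N. emb w \<in> Wupper N \<beta>}"

text \<open>alpha_m \<in> w(Rbar_+ \ Rbar_beta,+).\<close>
definition eta_cond :: "nat \<Rightarrow> nat list \<Rightarrow> (nat \<Rightarrow> nat) \<Rightarrow> nat \<Rightarrow> bool" where
  "eta_cond N \<beta> w m \<longleftrightarrow> (\<exists>i j. i < j \<and> j < N \<and> \<not> same_block \<beta> i j \<and>
      w i = m \<and> w j = Suc m)"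

text \<open>eta_w: (eta_w, eps_1) = 0 and (eta_w, alpha_m) = -1 if eta_cond, 0 otherwise.\<close>
definition eta_w :: "nat \<Rightarrow> nat list \<Rightarrow> (nat \<Rightarrow> nat) \<Rightarrow> nat \<Rightarrow> int" where
  "eta_w N \<beta> w = (\<lambda>i. if i < N then int (card {m. m < i \<and> eta_cond N \<beta> w m}) else 0)"

definition Pminus :: "nat \<Rightarrow> (nat \<Rightarrow> int) set" where
  "Pminus N = {\<eta>. (\<forall>i\<ge>N. \<eta> i = 0) \<and> (\<forall>i j. i < j \<and> j < N \<longrightarrow> \<eta> i \<le> \<eta> j)}"

definition Xbeta :: "nat \<Rightarrow> nat list \<Rightarrow> affW set" where
  "Xbeta N \<beta> = {((\<lambda>i. \<eta> i + eta_w N \<beta> w i), w) | \<eta> w.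
      w \<in> WbarUpper N \<beta> \<and> \<eta> \<in> Pminus N}"

definition coset :: "nat \<Rightarrow> nat list \<Rightarrow> affW \<Rightarrow> affW set" where
  "coset N \<beta> x = (\<lambda>v. wmult x (emb v)) ` Wbeta N \<beta>"

definition Wstab :: "nat \<Rightarrow> nat list \<Rightarrow> affW \<Rightarrow> (nat \<Rightarrow> nat) set" where
  "Wstab N \<beta> x = {u \<in> Wbar N. (\<lambda>y. wmult (emb u) y) ` coset N \<beta> x = coset N \<beta> x}"

definition Wbetax :: "nat \<Rightarrow> nat list \<Rightarrow> affW \<Rightarrow> (nat \<Rightarrow> nat) set" where
  "Wbetax N \<beta> x = gen {transpose m (Suc m) | m. Suc m < N \<and>
      (\<exists>i j. i < j \<and> j < N \<and> same_block \<beta> i j \<and> act x (i, j, 0) = (m, Suc m, 0))}"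

end

theory Submission
  imports Defs
begin

text \<open>Write x = t_e w. Left multiplication by u maps the coset x Wbar_beta = {t_e w v} to
  {t_(u e) u w v}, so u stabilises it iff u fixes e and w^-1 u w lies in Wbar_beta, that is, iff
  u preserves the labelling m \<mapsto> (e(m), block of w^-1(m)). Hence the stabiliser is the group of
  all label-preserving permutations, while Wbar_beta(x) is generated by the adjacent transpositions
  s_m for which m and m+1 carry the same label (here one uses that w, being minimal in its coset,
  increases on each block). The two groups coincide because every fibre of the labelling is an
  interval: e = eta + eta_w is monotone, hence constant on a fibre, so eta_w has no jump there;
  consequently the block of w^-1(m) can only decrease along the fibre, and as it agrees at both
  ends it is constant.\<close>

definition stabilizer_perms :: "nat \<Rightarrow> (nat \<Rightarrow> 'a) \<Rightarrow> (nat \<Rightarrow> nat) set" where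
  "stabilizer_perms N f = {u. u permutes {0..<N} \<and> (\<forall>i<N. f (u i) = f i)}"

definition convex_fibres :: "nat \<Rightarrow> (nat \<Rightarrow> 'a) \<Rightarrow> bool" where
  "convex_fibres N f \<longleftrightarrow> (\<forall>a d b. a \<le> d \<longrightarrow> d \<le> b \<longrightarrow> b < N \<longrightarrow> f a = f b \<longrightarrow> f d = f a)"

definition adjacent_transpositions :: "nat \<Rightarrow> (nat \<Rightarrow> 'a) \<Rightarrow> (nat \<Rightarrow> nat) set" where
  "adjacent_transpositions N f = {transpose m (Suc m) | m. Suc m < N \<and> f m = f (Suc m)}"

lemma gen_base: "s \<in> S \<Longrightarrow> s \<in> gen S"
  using gen_step[OF _ gen_id, of s S] by simp

lemma gen_comp: "g \<in> gen S \<Longrightarrow> h \<in> gen S \<Longrightarrow> g \<circ> h \<in> gen S"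
  by (induction g rule: gen.induct) (auto simp: comp_assoc intro: gen.intros)

lemma permutes_lessThan_less: "u permutes {0..<(N::nat)} \<Longrightarrow> i < N \<Longrightarrow> u i < N"
  using permutes_in_image[of u "{0..<N}" i] by auto

lemma id_in_stabilizer_perms: "id \<in> stabilizer_perms N f"
  by (simp add: stabilizer_perms_def permutes_id)

lemma transpose_in_stabilizer_perms:
  "a < N \<Longrightarrow> b < N \<Longrightarrow> f a = f b \<Longrightarrow> transpose a b \<in> stabilizer_perms N f"
  by (simp add: stabilizer_perms_def permutes_swap_id transpose_def)

lemma stabilizer_perms_comp:
  assumes "u \<in> stabilizer_perms N f" "v \<in> stabilizer_perms N f"
  shows "u \<circ> v \<in> stabilizer_perms N f"
  using assms by (simp add: stabilizer_perms_def permutes_compose permutes_lessThan_less)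

lemma stabilizer_perms_inv:
  assumes "u \<in> stabilizer_perms N f"
  shows "inv u \<in> stabilizer_perms N f"
proof -
  have u: "u permutes {0..<N}" using assms by (simp add: stabilizer_perms_def)
  have "f (inv u i) = f i" if "i < N" for i
  proof -
    have "f (u (inv u i)) = f (inv u i)"
      using assms permutes_lessThan_less[OF permutes_inv[OF u] that] by (simp add: stabilizer_perms_def)
    then show ?thesis by (simp add: permutes_inverses(1)[OF u])
  qed
  then show ?thesis using permutes_inv[OF u] by (simp add: stabilizer_perms_def)
qed

lemma stabilizer_perms_conj_iff:
  assumes w: "w permutes {0..<N}"
  shows "inv w \<circ> u \<circ> w \<in> stabilizer_perms N f \<longleftrightarrow> u \<in> stabilizer_perms N (f \<circ> inv w)"
proof -
  have "inv w \<circ> u \<circ> w permutes {0..<N} \<longleftrightarrow> u permutes {0..<N}"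
  proof
    assume "inv w \<circ> u \<circ> w permutes {0..<N}"
    then have "w \<circ> (inv w \<circ> u \<circ> w) \<circ> inv w permutes {0..<N}"
      using permutes_compose[OF permutes_inv[OF w] permutes_compose[OF _ w]] by blast
    then show "u permutes {0..<N}"
      by (simp add: fun_eq_iff comp_def permutes_inverses[OF w])
  qed (use w permutes_inv[OF w] in \<open>intro permutes_compose\<close>)
  moreover have "(\<forall>i<N. f (inv w (u (w i))) = f i) \<longleftrightarrow> (\<forall>m<N. f (inv w (u m)) = f (inv w m))"
    by (metis permutes_inverses[OF w] permutes_lessThan_less[OF w]
        permutes_lessThan_less[OF permutes_inv[OF w]])
  ultimately show ?thesis by (simp add: stabilizer_perms_def)
qed

lemma stabilizer_perms_comp_image:
  assumes "h \<in> stabilizer_perms N f"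
  shows "(\<lambda>v. h \<circ> v) ` stabilizer_perms N f = stabilizer_perms N f"
proof
  show "(\<lambda>v. h \<circ> v) ` stabilizer_perms N f \<subseteq> stabilizer_perms N f"
    using assms stabilizer_perms_comp by blast
  show "stabilizer_perms N f \<subseteq> (\<lambda>v. h \<circ> v) ` stabilizer_perms N f"
  proof
    fix v assume v: "v \<in> stabilizer_perms N f"
    have "h permutes {0..<N}" using assms by (simp add: stabilizer_perms_def)
    then have "v = h \<circ> (inv h \<circ> v)" by (simp add: fun_eq_iff permutes_inverses(1))
    moreover have "inv h \<circ> v \<in> stabilizer_perms N f"
      using stabilizer_perms_comp[OF stabilizer_perms_inv[OF assms] v] .
    ultimately show "v \<in> (\<lambda>v. h \<circ> v) ` stabilizer_perms N f" by blast
  qed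
qed

lemma left_coset_eq_iff:
  assumes w: "w permutes {0..<N}"
  shows "(\<lambda>v. u \<circ> w \<circ> v) ` stabilizer_perms N f = (\<lambda>v. w \<circ> v) ` stabilizer_perms N f
    \<longleftrightarrow> u \<in> stabilizer_perms N (f \<circ> inv w)"
proof
  assume eq: "(\<lambda>v. u \<circ> w \<circ> v) ` stabilizer_perms N f = (\<lambda>v. w \<circ> v) ` stabilizer_perms N f"
  have "u \<circ> w \<circ> id \<in> (\<lambda>v. u \<circ> w \<circ> v) ` stabilizer_perms N f"
    using id_in_stabilizer_perms by blast
  then obtain v where v: "v \<in> stabilizer_perms N f" and "u \<circ> w = w \<circ> v"
    unfolding eq by auto
  then have "inv w \<circ> u \<circ> w = v"
    by (simp add: comp_assoc fun_eq_iff permutes_inverses(2)[OF w])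
  with v have "inv w \<circ> u \<circ> w \<in> stabilizer_perms N f" by simp
  then show "u \<in> stabilizer_perms N (f \<circ> inv w)"
    using stabilizer_perms_conj_iff[OF w] by blast
next
  assume "u \<in> stabilizer_perms N (f \<circ> inv w)"
  then have h: "inv w \<circ> u \<circ> w \<in> stabilizer_perms N f"
    using stabilizer_perms_conj_iff[OF w] by blast
  have eq: "(\<lambda>v. u \<circ> w \<circ> v) = (\<lambda>v. w \<circ> v) \<circ> (\<lambda>v. (inv w \<circ> u \<circ> w) \<circ> v)"
    by (simp add: fun_eq_iff permutes_inverses(1)[OF w])
  have "(\<lambda>v. u \<circ> w \<circ> v) ` stabilizer_perms N f
      = (\<lambda>v. w \<circ> v) ` (\<lambda>v. (inv w \<circ> u \<circ> w) \<circ> v) ` stabilizer_perms N f"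
    by (subst eq) (rule image_comp[symmetric])
  then show "(\<lambda>v. u \<circ> w \<circ> v) ` stabilizer_perms N f = (\<lambda>v. w \<circ> v) ` stabilizer_perms N f"
    by (simp only: stabilizer_perms_comp_image[OF h])
qed

lemma comp_inv_eq_iff_stabilizer_perms:
  assumes u: "u permutes {0..<N}"
  shows "e \<circ> inv u = e \<longleftrightarrow> u \<in> stabilizer_perms N e"
proof
  assume "e \<circ> inv u = e"
  then have "e (inv u (u i)) = e (u i)" for i by (metis comp_apply)
  then show "u \<in> stabilizer_perms N e"
    using u by (simp add: stabilizer_perms_def permutes_inverses(2)[OF u])
next
  assume e: "u \<in> stabilizer_perms N e"
  have "e (inv u m) = e m" for m
  proof (cases "m < N")
    case True
    then have "e (u (inv u m)) = e (inv u m)"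
      using e permutes_lessThan_less[OF permutes_inv[OF u]] by (simp add: stabilizer_perms_def)
    then show ?thesis by (simp add: permutes_inverses(1)[OF u])
  next
    case False
    then show ?thesis using permutes_inv[OF u] by (simp add: permutes_not_in)
  qed
  then show "e \<circ> inv u = e" by (simp add: fun_eq_iff)
qed

lemma stabilizer_perms_pair:
  "stabilizer_perms N (\<lambda>m. (f m, g m)) = stabilizer_perms N f \<inter> stabilizer_perms N g"
  by (auto simp: stabilizer_perms_def)

lemma transpose_in_gen_adjacent_transpositions:
  assumes "convex_fibres N f"
  shows "a < b \<Longrightarrow> b < N \<Longrightarrow> f a = f b \<Longrightarrow> transpose a b \<in> gen (adjacent_transpositions N f)"
proof (induction "b - a" arbitrary: a)
  case 0
  then show ?case by simp
next
  case (Suc k)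
  have fa: "f (Suc a) = f a"
    using assms[unfolded convex_fibres_def, rule_format, of a "Suc a" b] Suc.prems by simp
  have s: "transpose a (Suc a) \<in> gen (adjacent_transpositions N f)"
    using Suc.prems fa by (intro gen_base) (auto simp: adjacent_transpositions_def)
  show ?case
  proof (cases "b = Suc a")
    case True
    with s show ?thesis by simp
  next
    case False
    have "transpose (Suc a) b \<in> gen (adjacent_transpositions N f)"
      by (rule Suc.hyps(1)) (use Suc.hyps(2) Suc.prems fa False in auto)
    then have "transpose a (Suc a) \<circ> transpose (Suc a) b \<circ> transpose a (Suc a)
        \<in> gen (adjacent_transpositions N f)"
      using gen_comp[OF gen_comp[OF s] s] by blast
    moreover have "transpose a (Suc a) \<circ> transpose (Suc a) b \<circ> transpose a (Suc a) = transpose a b"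
      using False Suc.prems by (intro transpose_comp_triple) auto
    ultimately show ?thesis by (simp only:)
  qed
qed

lemma gen_adjacent_transpositions_subset:
  "gen (adjacent_transpositions N f) \<subseteq> stabilizer_perms N f"
proof
  fix u assume "u \<in> gen (adjacent_transpositions N f)"
  then show "u \<in> stabilizer_perms N f"
  proof (induction u rule: gen.induct)
    case gen_id
    show ?case by (rule id_in_stabilizer_perms)
  next
    case (gen_step s g)
    then have "s \<in> stabilizer_perms N f"
      by (auto simp: adjacent_transpositions_def intro: transpose_in_stabilizer_perms)
    then show ?case using gen_step.IH by (rule stabilizer_perms_comp)
  qed
qed

lemma stabilizer_perms_subset_gen:
  assumes "convex_fibres N f"
  shows "u \<in> stabilizer_perms N f \<Longrightarrow> \<forall>i\<ge>n. u i = i \<Longrightarrow> u \<in> gen (adjacent_transpositions N f)"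
proof (induction n arbitrary: u)
  case 0
  then have "u = id" by auto
  then show ?case by (simp only: gen.gen_id)
next
  case (Suc n)
  have u: "u permutes {0..<N}" and fu: "\<forall>i<N. f (u i) = f i"
    using Suc.prems by (auto simp: stabilizer_perms_def)
  show ?case
  proof (cases "u n = n")
    case True
    have "\<forall>i\<ge>n. u i = i"
    proof (intro allI impI)
      fix i assume "n \<le> i"
      then show "u i = i" using Suc.prems(2) True by (cases "i = n") simp_all
    qed
    with Suc.prems(1) show ?thesis by (rule Suc.IH)
  next
    case False
    define p where "p = inv u n"
    have up: "u p = n" unfolding p_def using permutes_inverses(1)[OF u] .
    have nN: "n < N" using False u by (meson atLeastLessThan_iff permutes_not_in zero_le)
    have pN: "p < N" unfolding p_def using permutes_lessThan_less[OF permutes_inv[OF u] nN] .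
    have pn: "p < n"
    proof (rule ccontr)
      assume "\<not> p < n"
      then have "u p = p" using Suc.prems(2) up False by (cases "p = n") auto
      then show False using up False by simp
    qed
    have fpn: "f p = f n" using fu[rule_format, OF pN] up by simp
    define u' where "u' = u \<circ> transpose p n"
    have "u' \<in> stabilizer_perms N f" unfolding u'_def
      using Suc.prems(1) transpose_in_stabilizer_perms[OF pN nN fpn] by (rule stabilizer_perms_comp)
    moreover have "\<forall>i\<ge>n. u' i = i"
    proof (intro allI impI)
      fix i assume "n \<le> i"
      then show "u' i = i"
        using Suc.prems(2) up pn by (cases "i = n") (simp_all add: u'_def transpose_def)
    qed
    ultimately have "u' \<in> gen (adjacent_transpositions N f)" by (rule Suc.IH)
    moreover have "transpose p n \<in> gen (adjacent_transpositions N f)"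
      using transpose_in_gen_adjacent_transpositions[OF assms pn nN fpn] .
    ultimately have "u' \<circ> transpose p n \<in> gen (adjacent_transpositions N f)" by (rule gen_comp)
    then show ?thesis by (simp add: u'_def comp_assoc)
  qed
qed

lemma gen_adjacent_transpositions:
  assumes "convex_fibres N f"
  shows "gen (adjacent_transpositions N f) = stabilizer_perms N f"
proof
  show "stabilizer_perms N f \<subseteq> gen (adjacent_transpositions N f)"
  proof
    fix u assume u: "u \<in> stabilizer_perms N f"
    then have "\<forall>i\<ge>N. u i = i" by (auto simp: stabilizer_perms_def permutes_def)
    with u show "u \<in> gen (adjacent_transpositions N f)"
      by (rule stabilizer_perms_subset_gen[OF assms])
  qed
qed (rule gen_adjacent_transpositions_subset)

lemma less_by_Suc_steps:
  fixes g :: "nat \<Rightarrow> 'a::order"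
  assumes "\<And>m. i \<le> m \<Longrightarrow> m < j \<Longrightarrow> g m < g (Suc m)" and "i < j"
  shows "g i < g j"
  using assms
proof (induction j)
  case (Suc j)
  show ?case
  proof (cases "i = j")
    case False
    with Suc have "g i < g j" by simp
    also have "g j < g (Suc j)" using Suc.prems by simp
    finally show ?thesis .
  qed (use Suc.prems in simp)
qed simp

lemma antitone_by_Suc_steps:
  fixes g :: "nat \<Rightarrow> 'a::order"
  assumes "\<And>m. i \<le> m \<Longrightarrow> m < j \<Longrightarrow> g (Suc m) \<le> g m" and "i \<le> j"
  shows "g j \<le> g i"
  using assms(2)
proof (induction rule: dec_induct)
  case (step n)
  with assms(1)[of n] show ?case by simp
qed simp

lemma sum_list_take_mono:
  fixes xs :: "nat list"
  assumes "m \<le> n"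
  shows "sum_list (take m xs) \<le> sum_list (take n xs)"
proof -
  obtain d where "n = m + d" using assms le_Suc_ex by blast
  then show ?thesis by (simp add: take_add)
qed

definition block_index :: "nat list \<Rightarrow> nat \<Rightarrow> nat" where
  "block_index \<beta> i = (LEAST k. i < sum_list (take (Suc k) \<beta>))"

lemma block_index_eqI:
  assumes "sum_list (take k \<beta>) \<le> i" and "i < sum_list (take (Suc k) \<beta>)"
  shows "block_index \<beta> i = k"
  unfolding block_index_def
proof (rule Least_equality)
  show "i < sum_list (take (Suc k) \<beta>)" by fact
next
  fix k' assume k': "i < sum_list (take (Suc k') \<beta>)"
  show "k \<le> k'"
  proof (rule ccontr)
    assume "\<not> k \<le> k'"
    then have "sum_list (take (Suc k') \<beta>) \<le> sum_list (take k \<beta>)"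
      by (intro sum_list_take_mono) simp
    with assms(1) k' show False by simp
  qed
qed

lemma block_index_bounds:
  assumes "sum_list \<beta> = N" and "i < N"
  shows "block_index \<beta> i < length \<beta>"
    and "sum_list (take (block_index \<beta> i) \<beta>) \<le> i"
    and "i < sum_list (take (Suc (block_index \<beta> i)) \<beta>)"
proof -
  have "\<exists>k. i < sum_list (take (Suc k) \<beta>)"
    using assms by (intro exI[of _ "length \<beta>"]) simp
  then show upper: "i < sum_list (take (Suc (block_index \<beta> i)) \<beta>)"
    unfolding block_index_def by (rule LeastI_ex)
  show lower: "sum_list (take (block_index \<beta> i) \<beta>) \<le> i"
  proof (cases "block_index \<beta> i")
    case (Suc k)
    then have "k < block_index \<beta> i" by simp
    then have "\<not> i < sum_list (take (Suc k) \<beta>)"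
      unfolding block_index_def by (rule not_less_Least)
    with Suc show ?thesis by simp
  qed simp
  show "block_index \<beta> i < length \<beta>"
  proof (rule ccontr)
    assume "\<not> block_index \<beta> i < length \<beta>"
    with lower assms show False by simp
  qed
qed

lemma same_block_iff:
  assumes "sum_list \<beta> = N"
  shows "same_block \<beta> i j \<longleftrightarrow> i < N \<and> j < N \<and> block_index \<beta> i = block_index \<beta> j"
proof
  assume "same_block \<beta> i j"
  then obtain k where k: "k < length \<beta>"
    "sum_list (take k \<beta>) \<le> i" "i < sum_list (take (Suc k) \<beta>)"
    "sum_list (take k \<beta>) \<le> j" "j < sum_list (take (Suc k) \<beta>)"
    unfolding same_block_def by blast
  have "sum_list (take (Suc k) \<beta>) \<le> N"
    using sum_list_take_mono[of "Suc k" "length \<beta>" \<beta>] k(1) assms by simp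
  with k show "i < N \<and> j < N \<and> block_index \<beta> i = block_index \<beta> j"
    using block_index_eqI by auto
next
  assume "i < N \<and> j < N \<and> block_index \<beta> i = block_index \<beta> j"
  then show "same_block \<beta> i j"
    unfolding same_block_def
    by (intro exI[of _ "block_index \<beta> i"])
      (use block_index_bounds[OF assms, of i] block_index_bounds[OF assms, of j] in auto)
qed

lemma block_index_mono:
  assumes "sum_list \<beta> = N" and "i \<le> j" and "j < N"
  shows "block_index \<beta> i \<le> block_index \<beta> j"
  using block_index_bounds(3)[OF assms(1,3)] assms(2)
  unfolding block_index_def by (intro Least_le) simp

lemma convex_fibres_block_index:
  assumes "sum_list \<beta> = N"
  shows "convex_fibres N (block_index \<beta>)"
  unfolding convex_fibres_def
proof (intro allI impI)
  fix a d b assume "a \<le> d" "d \<le> b" "b < N" "block_index \<beta> a = block_index \<beta> b"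
  then show "block_index \<beta> d = block_index \<beta> a"
    using block_index_mono[OF assms, of a d] block_index_mono[OF assms, of d b] by simp
qed

lemma Wbeta_eq_stabilizer_perms:
  assumes "sum_list \<beta> = N"
  shows "Wbeta N \<beta> = stabilizer_perms N (block_index \<beta>)"
proof -
  have "Wbeta N \<beta> = gen (adjacent_transpositions N (block_index \<beta>))"
    unfolding Wbeta_def adjacent_transpositions_def
    by (rule arg_cong[where f = gen]) (auto simp: same_block_iff[OF assms])
  then show ?thesis
    using gen_adjacent_transpositions[OF convex_fibres_block_index[OF assms]] by simp
qed

lemma Pair_image_eq_iff:
  assumes "A \<noteq> {}"
  shows "(\<lambda>v. (a, f v)) ` A = (\<lambda>v. (b, g v)) ` A \<longleftrightarrow> a = b \<and> f ` A = g ` A"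
proof
  assume eq: "(\<lambda>v. (a, f v)) ` A = (\<lambda>v. (b, g v)) ` A"
  then have "fst ` (\<lambda>v. (a, f v)) ` A = fst ` (\<lambda>v. (b, g v)) ` A"
    and "snd ` (\<lambda>v. (a, f v)) ` A = snd ` (\<lambda>v. (b, g v)) ` A"
    by simp_all
  with assms show "a = b \<and> f ` A = g ` A" by (simp add: image_image image_constant_conv)
next
  assume "a = b \<and> f ` A = g ` A"
  then have "Pair a ` f ` A = Pair b ` g ` A" by simp
  then show "(\<lambda>v. (a, f v)) ` A = (\<lambda>v. (b, g v)) ` A" by (simp add: image_image)
qed

definition coset_label :: "nat list \<Rightarrow> affW \<Rightarrow> nat \<Rightarrow> int \<times> nat" where
  "coset_label \<beta> x m = (fst x m, block_index \<beta> (inv (snd x) m))"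

lemma Wstab_eq_stabilizer_perms:
  assumes "sum_list \<beta> = N" and "snd x permutes {0..<N}"
  shows "Wstab N \<beta> x = stabilizer_perms N (coset_label \<beta> x)"
proof -
  obtain e w where x: "x = (e, w)" by fastforce
  with assms(2) have w: "w permutes {0..<N}" by simp
  let ?H = "stabilizer_perms N (block_index \<beta>)"
  have coset: "coset N \<beta> x = (\<lambda>v. (e, w \<circ> v)) ` ?H"
    unfolding coset_def Wbeta_eq_stabilizer_perms[OF assms(1)] x
    by (simp add: wmult_def emb_def)
  have image: "(\<lambda>y. wmult (emb u) y) ` (\<lambda>v. (e, w \<circ> v)) ` ?H
      = (\<lambda>v. (e \<circ> inv u, u \<circ> w \<circ> v)) ` ?H" for u
    unfolding image_image by (simp add: wmult_def emb_def comp_def)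
  have "?H \<noteq> {}" using id_in_stabilizer_perms by blast
  then have "u \<in> Wstab N \<beta> x \<longleftrightarrow> u permutes {0..<N} \<and> e \<circ> inv u = e
      \<and> (\<lambda>v. u \<circ> w \<circ> v) ` ?H = (\<lambda>v. w \<circ> v) ` ?H" for u
    unfolding Wstab_def Wbar_def mem_Collect_eq coset image by (simp add: Pair_image_eq_iff)
  also have "\<dots> u \<longleftrightarrow> u \<in> stabilizer_perms N e \<and> u \<in> stabilizer_perms N (block_index \<beta> \<circ> inv w)" for u
    using comp_inv_eq_iff_stabilizer_perms[of u N e] left_coset_eq_iff[OF w, of u "block_index \<beta>"]
    unfolding stabilizer_perms_def[of N e] by blast
  also have "\<dots> u \<longleftrightarrow> u \<in> stabilizer_perms N (coset_label \<beta> x)" for u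
  proof -
    have "coset_label \<beta> x = (\<lambda>m. (e m, (block_index \<beta> \<circ> inv w) m))"
      by (simp add: fun_eq_iff coset_label_def x)
    then show ?thesis by (simp add: stabilizer_perms_pair comp_def)
  qed
  finally show ?thesis by blast
qed

definition inversions :: "nat \<Rightarrow> (nat \<Rightarrow> nat) \<Rightarrow> (nat \<times> nat) set" where
  "inversions N w = {(a, b). a < b \<and> b < N \<and> w b < w a}"

lemma finite_inversions: "finite (inversions N w)"
  by (rule finite_subset[of _ "{..<N} \<times> {..<N}"]) (auto simp: inversions_def)

lemma len_emb:
  assumes w: "w permutes {0..<N}"
  shows "len N (emb w) = card (inversions N w)"
proof -
  have root_iff: "pos_root N (i, j, k) \<and> neg_root N (act (emb w) (i, j, k))
      \<longleftrightarrow> k = 0 \<and> (i, j) \<in> inversions N w" for i j k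
  proof -
    have "act (emb w) (i, j, k) = (w i, w j, k)" by (simp add: act_def emb_def)
    then show ?thesis
      using permutes_lessThan_less[OF w, of i] permutes_lessThan_less[OF w, of j]
      by (auto simp: pos_root_def neg_root_def inversions_def)
  qed
  have "{a. pos_root N a \<and> neg_root N (act (emb w) a)} = (\<lambda>(i, j). (i, j, 0)) ` inversions N w"
  proof (rule set_eqI)
    fix a :: aroot
    obtain i j k where a: "a = (i, j, k)" by (cases a)
    show "a \<in> {a. pos_root N a \<and> neg_root N (act (emb w) a)} \<longleftrightarrow> a \<in> (\<lambda>(i, j). (i, j, 0)) ` inversions N w"
      unfolding a mem_Collect_eq root_iff by auto
  qed
  moreover have "inj_on (\<lambda>(i, j). (i, j, 0::int)) (inversions N w)"
    by (auto simp: inj_on_def)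
  ultimately show ?thesis unfolding len_def by (simp add: card_image)
qed

lemma card_inversions_comp_transpose_less:
  assumes w: "w permutes {0..<N}" and i: "Suc i < N" and descent: "w (Suc i) < w i"
  shows "card (inversions N (w \<circ> transpose i (Suc i))) < card (inversions N w)"
proof -
  let ?s = "transpose i (Suc i)"
  let ?f = "\<lambda>(a, b). (?s a, ?s b)"
  have "?f ` inversions N (w \<circ> ?s) \<subseteq> inversions N w - {(i, Suc i)}"
  proof
    fix p assume "p \<in> ?f ` inversions N (w \<circ> ?s)"
    then obtain a b where p: "p = (?s a, ?s b)" and ab: "a < b" "b < N" "w (?s b) < w (?s a)"
      by (auto simp: inversions_def)
    have ne: "(a, b) \<noteq> (i, Suc i)" using ab descent by auto
    have "?s a < ?s b" using ab(1) ne by (auto simp: transpose_def)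
    moreover have "?s b < N" using ab(2) i by (auto simp: transpose_def)
    moreover have "(?s a, ?s b) \<noteq> (i, Suc i)"
      using ne ab(1) by (auto simp: transpose_def split: if_splits)
    ultimately show "p \<in> inversions N w - {(i, Suc i)}" using p ab by (auto simp: inversions_def)
  qed
  then have "card (?f ` inversions N (w \<circ> ?s)) \<le> card (inversions N w - {(i, Suc i)})"
    by (intro card_mono) (simp_all add: finite_inversions)
  moreover have "inj_on ?f (inversions N (w \<circ> ?s))"
    by (auto simp: inj_on_def transpose_eq_iff)
  ultimately have "card (inversions N (w \<circ> ?s)) \<le> card (inversions N w - {(i, Suc i)})"
    by (simp add: card_image)
  also have "\<dots> < card (inversions N w)"
    using i descent finite_inversions by (intro card_Diff1_less) (auto simp: inversions_def)
  finally show ?thesis .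
qed

lemma WbarUpper_Suc_less:
  assumes w: "w \<in> WbarUpper N \<beta>" and i: "Suc i < N" and "same_block \<beta> i (Suc i)"
  shows "w i < w (Suc i)"
proof (rule ccontr)
  have wp: "w permutes {0..<N}" using w by (simp add: WbarUpper_def Wbar_def)
  assume "\<not> w i < w (Suc i)"
  moreover have "w i \<noteq> w (Suc i)" using permutes_inj[OF wp] by (simp add: inj_eq)
  ultimately have descent: "w (Suc i) < w i" by simp
  have "transpose i (Suc i) \<in> Wbeta N \<beta>"
    unfolding Wbeta_def by (rule gen_base) (use assms in auto)
  with w have "len N (emb w) \<le> len N (emb (w \<circ> transpose i (Suc i)))"
    by (simp add: WbarUpper_def Wupper_def wmult_def emb_def)
  moreover have "w \<circ> transpose i (Suc i) permutes {0..<N}"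
    using wp i by (intro permutes_compose permutes_swap_id) auto
  ultimately show False
    using card_inversions_comp_transpose_less[OF wp i descent] len_emb wp by simp
qed

lemma WbarUpper_less_in_block:
  assumes N: "sum_list \<beta> = N" and w: "w \<in> WbarUpper N \<beta>"
    and "i < j" and "same_block \<beta> i j"
  shows "w i < w j"
proof (rule less_by_Suc_steps[OF _ \<open>i < j\<close>])
  fix m assume m: "i \<le> m" "m < j"
  have j: "j < N" and ij: "block_index \<beta> i = block_index \<beta> j"
    using assms(4) same_block_iff[OF N] by auto
  have "block_index \<beta> m = block_index \<beta> (Suc m)"
    using block_index_mono[OF N, of i m] block_index_mono[OF N, of m "Suc m"]
      block_index_mono[OF N, of "Suc m" j] m j ij by simp
  then have "same_block \<beta> m (Suc m)" using same_block_iff[OF N] m j by simp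
  then show "w m < w (Suc m)" using WbarUpper_Suc_less[OF w] m j by simp
qed

lemma eta_w_mono: "i \<le> j \<Longrightarrow> j < N \<Longrightarrow> eta_w N \<beta> w i \<le> eta_w N \<beta> w j"
  unfolding eta_w_def by (auto intro!: card_mono)

lemma eta_w_Suc_gt:
  assumes "Suc m < N" and "eta_cond N \<beta> w m"
  shows "eta_w N \<beta> w m < eta_w N \<beta> w (Suc m)"
proof -
  have "{m'. m' < Suc m \<and> eta_cond N \<beta> w m'} = insert m {m'. m' < m \<and> eta_cond N \<beta> w m'}"
    using assms(2) by auto
  with assms(1) show ?thesis by (simp add: eta_w_def)
qed

lemma Xbeta_snd_WbarUpper: "x \<in> Xbeta N \<beta> \<Longrightarrow> snd x \<in> WbarUpper N \<beta>"
  by (auto simp: Xbeta_def)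

lemma Xbeta_fst_mono:
  assumes "x \<in> Xbeta N \<beta>" and "i \<le> j" and "j < N"
  shows "fst x i \<le> fst x j"
proof -
  obtain \<eta> w where x: "x = (\<lambda>i. \<eta> i + eta_w N \<beta> w i, w)" and \<eta>: "\<eta> \<in> Pminus N"
    using assms(1) by (auto simp: Xbeta_def)
  have "\<eta> i \<le> \<eta> j" using \<eta> assms(2,3) by (cases "i = j") (auto simp: Pminus_def)
  with eta_w_mono[OF assms(2,3)] show ?thesis by (simp add: x add_mono)
qed

lemma Xbeta_fst_Suc_gt:
  assumes "x \<in> Xbeta N \<beta>" and "Suc m < N" and "eta_cond N \<beta> (snd x) m"
  shows "fst x m < fst x (Suc m)"
proof -
  obtain \<eta> w where x: "x = (\<lambda>i. \<eta> i + eta_w N \<beta> w i, w)" and \<eta>: "\<eta> \<in> Pminus N"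
    using assms(1) by (auto simp: Xbeta_def)
  have "\<eta> m \<le> \<eta> (Suc m)" using \<eta> assms(2) by (auto simp: Pminus_def)
  with eta_w_Suc_gt[OF assms(2)] assms(3) show ?thesis by (simp add: x add_le_less_mono)
qed
lemma Xbeta_snd_permutes: "x \<in> Xbeta N \<beta> \<Longrightarrow> snd x permutes {0..<N}"
  using Xbeta_snd_WbarUpper by (simp add: WbarUpper_def Wbar_def)

lemma convex_fibres_coset_label:
  assumes N: "sum_list \<beta> = N" and x: "x \<in> Xbeta N \<beta>"
  shows "convex_fibres N (coset_label \<beta> x)"
  unfolding convex_fibres_def
proof (intro allI impI)
  fix a d b assume ad: "a \<le> d" and db: "d \<le> b" and b: "b < N"
    and ab: "coset_label \<beta> x a = coset_label \<beta> x b"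
  let ?e = "fst x" and ?p = "inv (snd x)"
  let ?g = "\<lambda>m. block_index \<beta> (?p m)"
  have wp: "snd x permutes {0..<N}" using Xbeta_snd_permutes[OF x] .
  have e_ab: "?e a = ?e b" and g_ab: "?g a = ?g b" using ab by (simp_all add: coset_label_def)
  have e_const: "?e m = ?e a" if "a \<le> m" "m \<le> b" for m
    using Xbeta_fst_mono[OF x, of a m] Xbeta_fst_mono[OF x, of m b] that b e_ab by simp
  have g_step: "?g (Suc m) \<le> ?g m" if m: "a \<le> m" "m < b" for m
  proof -
    have p_less: "?p m < N" "?p (Suc m) < N"
      using permutes_lessThan_less[OF permutes_inv[OF wp]] m b by auto
    have w_p: "snd x (?p m) = m" "snd x (?p (Suc m)) = Suc m"
      using permutes_inverses(1)[OF wp] by auto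
    \<comment> \<open>the translation part is constant on [a, b], so eta_w has no jump there\<close>
    have "\<not> eta_cond N \<beta> (snd x) m"
    proof
      assume "eta_cond N \<beta> (snd x) m"
      then have "?e m < ?e (Suc m)" using Xbeta_fst_Suc_gt[OF x] m b by simp
      with e_const[of m] e_const[of "Suc m"] m show False by simp
    qed
    then have no_cross: "\<not> (?p m < ?p (Suc m) \<and> \<not> same_block \<beta> (?p m) (?p (Suc m)))"
      using p_less w_p unfolding eta_cond_def by blast
    consider "?p m < ?p (Suc m)" | "?p (Suc m) < ?p m"
      using w_p by (metis less_linear n_not_Suc_n)
    then show ?thesis
    proof cases
      case 1
      with no_cross show ?thesis using same_block_iff[OF N] by simp
    next
      case 2
      then show ?thesis using block_index_mono[OF N] p_less by simp
    qed
  qed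
  have "?g d \<le> ?g a" by (rule antitone_by_Suc_steps[OF _ ad]) (use g_step db in auto)
  moreover have "?g b \<le> ?g d" by (rule antitone_by_Suc_steps[OF _ db]) (use g_step ad in auto)
  ultimately have "?g d = ?g a" using g_ab by simp
  with e_const[OF ad db] show "coset_label \<beta> x d = coset_label \<beta> x a"
    by (simp add: coset_label_def)
qed

lemma Wbetax_eq_gen_adjacent_transpositions:
  assumes N: "sum_list \<beta> = N" and x: "x \<in> Xbeta N \<beta>"
  shows "Wbetax N \<beta> x = gen (adjacent_transpositions N (coset_label \<beta> x))"
proof -
  let ?e = "fst x" and ?w = "snd x"
  have w: "?w \<in> WbarUpper N \<beta>" using Xbeta_snd_WbarUpper[OF x] .
  have wp: "?w permutes {0..<N}" using Xbeta_snd_permutes[OF x] .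
  have "(\<exists>i j. i < j \<and> j < N \<and> same_block \<beta> i j \<and> act x (i, j, 0) = (m, Suc m, 0))
      \<longleftrightarrow> coset_label \<beta> x m = coset_label \<beta> x (Suc m)" if m: "Suc m < N" for m
  proof
    assume "\<exists>i j. i < j \<and> j < N \<and> same_block \<beta> i j \<and> act x (i, j, 0) = (m, Suc m, 0)"
    then obtain i j where ij: "same_block \<beta> i j" "act x (i, j, 0) = (m, Suc m, 0)"
      by blast
    then have "?w i = m" "?w j = Suc m" "?e m = ?e (Suc m)"
      by (auto simp: act_def)
    then have "inv ?w m = i" "inv ?w (Suc m) = j" "?e m = ?e (Suc m)"
      using permutes_inv_eq[OF wp] by auto
    with ij(1) show "coset_label \<beta> x m = coset_label \<beta> x (Suc m)"
      using same_block_iff[OF N] by (simp add: coset_label_def)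
  next
    assume label: "coset_label \<beta> x m = coset_label \<beta> x (Suc m)"
    define i j where "i = inv ?w m" and "j = inv ?w (Suc m)"
    have ij_less: "i < N" "j < N"
      unfolding i_def j_def using permutes_lessThan_less[OF permutes_inv[OF wp]] m by auto
    have w_ij: "?w i = m" "?w j = Suc m"
      unfolding i_def j_def using permutes_inverses(1)[OF wp] by auto
    have sb: "same_block \<beta> i j" and sb': "same_block \<beta> j i"
      using label ij_less same_block_iff[OF N] by (auto simp: coset_label_def i_def j_def)
    have "i < j"
    proof (rule ccontr)
      assume "\<not> i < j"
      moreover have "i \<noteq> j" using w_ij by auto
      ultimately have "?w j < ?w i" using WbarUpper_less_in_block[OF N w _ sb'] by simp
      with w_ij show False by simp
    qed
    moreover have "act x (i, j, 0) = (m, Suc m, 0)"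
      using label w_ij by (simp add: act_def coset_label_def)
    ultimately show "\<exists>i j. i < j \<and> j < N \<and> same_block \<beta> i j \<and> act x (i, j, 0) = (m, Suc m, 0)"
      using ij_less sb by blast
  qed
  then show ?thesis
    unfolding Wbetax_def adjacent_transpositions_def
    by (intro arg_cong[where f = gen]) blast
qed

theorem proposition2p17:
  fixes N :: nat and \<beta> :: "nat list" and x :: affW
  assumes "N \<ge> 2" and "ordered_partition N \<beta>" and "x \<in> Xbeta N \<beta>"
  shows "Wstab N \<beta> x = Wbetax N \<beta> x"
proof -
  have N: "sum_list \<beta> = N" using assms(2) by (simp add: ordered_partition_def)
  have "Wstab N \<beta> x = stabilizer_perms N (coset_label \<beta> x)"
    using Wstab_eq_stabilizer_perms[OF N Xbeta_snd_permutes[OF assms(3)]] .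
  also have "\<dots> = gen (adjacent_transpositions N (coset_label \<beta> x))"
    using gen_adjacent_transpositions[OF convex_fibres_coset_label[OF N assms(3)]] by simp
  also have "\<dots> = Wbetax N \<beta> x"
    using Wbetax_eq_gen_adjacent_transpositions[OF N assms(3)] by simp
  finally show ?thesis .
qed

end
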